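(* Let $p\ge 1$, let $F:\mathbb{R}^p\to\mathbb{R}^p$ and $G(\boldsymbol{x}) := F(\boldsymbol{x})-\boldsymbol{x}$, and let $\boldsymbol{x}^\ast\in\mathbb{R}^p$. Assume (A1): $G$ is differentiable in an open convex set $D$ containing $\boldsymbol{x}^\ast$, $G(\boldsymbol{x}^\ast)=0$, $dG(\boldsymbol{x}^\ast)$ is non-singular, and for some constants $d>0$ and $K$, $\|dG(\boldsymbol{x})-dG(\boldsymbol{x}^\ast)\|\le K\|\boldsymbol{x}-\boldsymbol{x}^\ast\|^d$ for all $\boldsymbol{x}\in D$. Suppose there exist a constant $\mu_2\ge 0$, a non-singular symmetric matrix $M\in\mathbb{R}^{p\times p}$, and a neighborhood $N'$ of $(\boldsymbol{x}^\ast,dG(\boldsymbol{x}^\ast)^{-1})$ such that for all $(\boldsymbol{x},H)\in N'$, with $\boldsymbol{v}=G(F(\boldsymbol{x}))-G(\boldsymbol{x})\neq 0$, $$\frac{\|M\boldsymbol{v}-M^{-1}\boldsymbol{v}\|}{\|M^{-1}\boldsymbol{v}\|}\le\mu_2\|\boldsymbol{v}\|^d.$$ Then the updates $\bar{\boldsymbol{x}}=\boldsymbol{x}-HG(\boldsymbol{x})$ and $\bar H=H-H\frac{\boldsymbol{v}\boldsymbol{v}^T}{\boldsymbol{v}^T\boldsymbol{v}}+\frac{\boldsymbol{u}\boldsymbol{v}^T}{\boldsymbol{v}^T\boldsymbol{v}}$ are well-defined in a neighborhood $N$ of $(\boldsymbol{x}^\ast,dG(\boldsymbol{x}^\ast)^{-1})$,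 and the corresponding iteration $\boldsymbol{x}_{k+1}=\boldsymbol{x}_k-H_kG(\boldsymbol{x}_k)$, $H_{k+1}=\bar H$ evaluated at $(\boldsymbol{x}_k,H_k)$, is locally convergent to $\boldsymbol{x}^\ast$: there exist $\epsilon>0$, $\delta>0$ such that whenever $\|\boldsymbol{x}_0-\boldsymbol{x}^\ast\|<\epsilon$ and $\|H_0-dG(\boldsymbol{x}^\ast)^{-1}\|_M<\delta$, the iteration is well-defined and $\boldsymbol{x}_k\to\boldsymbol{x}^\ast$.
   Context: $F$ is a majorization–minimization (MM) algorithm map and $G$ its residual; $dG$ denotes the Jacobian of $G$. $\|\cdot\|$ is a chosen vector norm on $\mathbb{R}^p$ and, for matrices, its induced operator norm; $\|A\|_M:=\|MAM\|_F$ with $\|\cdot\|_F$ the Frobenius norm. For a pair $(\boldsymbol{x},H)$, $\boldsymbol{u}=F(\boldsymbol{x})-\boldsymbol{x}$ and $\boldsymbol{v}=G(F(\boldsymbol{x}))-G(\boldsymbol{x})$. Standing assumption: the MM map is locally convergent to $\boldsymbol{x}^\ast$ in a neighborhood $S$ of $\boldsymbol{x}^\ast$ with linear rate $\tau$, i.e. $\|F(\boldsymbol{x})-\boldsymbol{x}^\ast\|\le\tau\|\boldsymbol{x}-\boldsymbol{x}^\ast\|$ for all $\boldsymbol{x}\in S$, with $\tau\in(0,1)$. *)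

theory Defs
  imports "HOL-Analysis.Analysis"
begin

definition is_vnorm :: "(real^'n \<Rightarrow> real) \<Rightarrow> bool" where
  "is_vnorm nv \<longleftrightarrow>
     (\<forall>x. nv x = 0 \<longleftrightarrow> x = 0) \<and>
     (\<forall>c x. nv (c *\<^sub>R x) = \<bar>c\<bar> * nv x) \<and>
     (\<forall>x y. nv (x + y) \<le> nv x + nv y)"

definition opnorm :: "(real^'n \<Rightarrow> real) \<Rightarrow> real^'n^'n \<Rightarrow> real" where
  "opnorm nv A = Sup {nv (A *v x) / nv x | x. x \<noteq> 0}"

definition frob_norm :: "real^'n^'m \<Rightarrow> real" where
  "frob_norm A = sqrt (\<Sum>i\<in>UNIV. \<Sum>j\<in>UNIV. (A $ i $ j)^2)"

definition outer :: "real^'m \<Rightarrow> real^'n \<Rightarrow> real^'n^'m" where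
  "outer u v = (\<chi> i j. u $ i * v $ j)"

definition resid :: "(real^'n \<Rightarrow> real^'n) \<Rightarrow> real^'n \<Rightarrow> real^'n" where
  "resid F x = F x - x"

definition qn_u :: "(real^'n \<Rightarrow> real^'n) \<Rightarrow> real^'n \<Rightarrow> real^'n" where
  "qn_u F x = F x - x"

definition qn_v :: "(real^'n \<Rightarrow> real^'n) \<Rightarrow> real^'n \<Rightarrow> real^'n" where
  "qn_v F x = resid F (F x) - resid F x"

text \<open>One step of the quasi-Newton iteration (x,H) to (xbar,Hbar).
  When v = 0 the division is by zero; this only happens (near x*) at x = x*,
  where G(x*) = 0 so the iterate is stationary.\<close>
definition qn_step :: "(real^'n \<Rightarrow> real^'n) \<Rightarrow> (real^'n) \<times> (real^'n^'n) \<Rightarrow> (real^'n) \<times> (real^'n^'n)" where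
  "qn_step F xH = (let x = fst xH; H = snd xH; u = qn_u F x; v = qn_v F x in
     (x - H *v resid F x,
      H - inverse (v \<bullet> v) *\<^sub>R (H ** outer v v) + inverse (v \<bullet> v) *\<^sub>R outer u v))"

end

theory Submission
  imports Defs
begin

text \<open>All norms on R^p are equivalent, so the argument runs in the Euclidean norm, whose matrix
  version norm on real^'n^'n is the Frobenius norm. The Hoelder condition on dG makes G linear up
  to a relative error eta = O(|x - x*|^d) along x - x* and along the secant u = F x - x; hence
  |u| = O(|v|), and while H stays close to J^-1 = dG(x*)^-1 a step halves the distance to x* and
  v is nonzero unless x = x*. In
  Hbar - J^-1 = (H - J^-1)(I - v v^T / v^T v) + (u - J^-1 v) v^T / v^T v
  the first term has at most the Frobenius norm of H - J^-1, since I - v v^T / v^T v is an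
  orthogonal projection, and the second has norm O(eta). So |H_k - J^-1| grows at most by a
  convergent geometric series: bounded deterioration.\<close>

lemma frob_norm_eq_norm: "frob_norm (A::real^'n^'m) = norm A"
  unfolding frob_norm_def norm_vec_def L2_set_def
  by (simp add: sum_nonneg)

lemma norm_matrix_vector_mult_le: "norm ((A::real^'n^'m) *v x) \<le> norm A * norm x"
proof -
  have "norm (A *v x) = L2_set (\<lambda>i. \<bar>A $ i \<bullet> x\<bar>) UNIV"
    by (simp add: norm_vec_def matrix_vector_mul_component)
  also have "\<dots> \<le> L2_set (\<lambda>i. norm x * norm (A $ i)) UNIV"
    by (rule L2_set_mono) (metis Cauchy_Schwarz_ineq2 mult.commute, simp)
  also have "\<dots> = norm x * norm A"
    by (simp add: norm_vec_def L2_set_right_distrib)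
  finally show ?thesis
    by (simp add: mult.commute)
qed

lemma matrix_inv_mult:
  assumes "invertible (A::real^'n^'n)"
  shows "A ** matrix_inv A = mat 1" and "matrix_inv A ** A = mat 1"
  using someI_ex[OF assms[unfolded invertible_def]] unfolding matrix_inv_def by blast+

lemma norm_le_sandwich:
  assumes "invertible (M::real^'n^'n)"
  obtains C where "0 < C" "\<And>E. norm E \<le> C * norm (M ** E ** M)"
proof -
  have "linear (\<lambda>W::real^'n^'n. matrix_inv M ** W ** matrix_inv M)"
    by (auto simp: linear_iff matrix_matrix_mult_def vec_eq_iff sum.distrib algebra_simps
        sum_distrib_left sum_distrib_right)
  then obtain C where C: "0 < C" "\<And>W. norm (matrix_inv M ** W ** matrix_inv M) \<le> norm W * C"
    using bounded_linear.pos_bounded linear_conv_bounded_linear by blast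
  have "matrix_inv M ** (M ** E ** M) ** matrix_inv M
      = (matrix_inv M ** M) ** E ** (M ** matrix_inv M)" for E
    by (simp add: matrix_mul_assoc)
  then have "E = matrix_inv M ** (M ** E ** M) ** matrix_inv M" for E
    by (simp add: matrix_inv_mult[OF assms])
  then have "norm E \<le> C * norm (M ** E ** M)" for E
    by (metis C(2) mult.commute)
  with C(1) show ?thesis
    using that by blast
qed

lemma outer_row: "outer u v $ i = u $ i *\<^sub>R v"
  by (simp add: outer_def vec_eq_iff)

lemma norm_outer: "norm (outer (u::real^'m) (v::real^'n)) = norm u * norm v"
proof -
  have row: "norm (outer u v $ i) = norm v * \<bar>u $ i\<bar>" for i
    by (simp add: outer_row)
  have "norm (outer u v) = L2_set (\<lambda>i. norm v * \<bar>u $ i\<bar>) UNIV"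
    unfolding norm_vec_def[of "outer u v"] row ..
  also have "\<dots> = norm v * norm u"
    by (simp add: norm_vec_def L2_set_right_distrib[symmetric])
  finally show ?thesis
    by simp
qed

lemma matrix_mult_outer: "(A::real^'m^'k) ** outer u (v::real^'n) = outer (A *v u) v"
  by (simp add: outer_def matrix_matrix_mult_def matrix_vector_mult_def vec_eq_iff
      sum_distrib_right mult.assoc)

lemma outer_diff_left: "outer (a - b) c = outer a c - outer b c"
  by (simp add: outer_def vec_eq_iff algebra_simps)

lemma norm_minus_projection_le:
  fixes e v :: "real^'n"
  shows "norm (e - (e \<bullet> v / (v \<bullet> v)) *\<^sub>R v) \<le> norm e"
proof (cases "v = 0")
  case False
  let ?w = "e - (e \<bullet> v / (v \<bullet> v)) *\<^sub>R v"
  have "?w \<bullet> ?w = e \<bullet> e - (e \<bullet> v)^2 / (v \<bullet> v)"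
    using False
    by (simp add: inner_diff_left inner_diff_right power2_eq_square field_simps inner_commute)
  also have "\<dots> \<le> e \<bullet> e"
    by simp
  finally show ?thesis
    by (simp add: power2_norm_eq_inner[symmetric] power2_le_iff_abs_le)
qed simp

lemma norm_minus_row_projection_le:
  fixes E :: "real^'n^'m"
  shows "norm (E - inverse (v \<bullet> v) *\<^sub>R outer (E *v v) v) \<le> norm E"
  unfolding norm_vec_def[of E] norm_vec_def[of "E - _"]
  by (rule L2_set_mono)
    (use norm_minus_projection_le
      in \<open>simp_all add: outer_row matrix_vector_mul_component divide_inverse_commute\<close>)

lemma broyden_update_deviation:
  fixes H Ji :: "real^'n^'n"
  shows "norm (H - inverse (v \<bullet> v) *\<^sub>R (H ** outer v v) + inverse (v \<bullet> v) *\<^sub>R outer u v - Ji)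
           \<le> norm (H - Ji) + norm (u - Ji *v v) / norm v"
proof -
  let ?c = "inverse (v \<bullet> v)" and ?E = "H - Ji"
  have "H - ?c *\<^sub>R (H ** outer v v) + ?c *\<^sub>R outer u v - Ji
      = (?E - ?c *\<^sub>R outer (?E *v v) v) + ?c *\<^sub>R outer (u - Ji *v v) v"
    by (simp add: matrix_mult_outer outer_diff_left algebra_simps)
  then have "norm (H - ?c *\<^sub>R (H ** outer v v) + ?c *\<^sub>R outer u v - Ji)
      \<le> norm (?E - ?c *\<^sub>R outer (?E *v v) v) + norm (?c *\<^sub>R outer (u - Ji *v v) v)"
    by (metis norm_triangle_ineq)
  also have "\<dots> \<le> norm ?E + norm (u - Ji *v v) / norm v"
    using norm_minus_row_projection_le[of ?E v]
    by (simp add: norm_outer power2_norm_eq_inner[symmetric] power2_eq_square field_simps)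
  finally show ?thesis .
qed

lemma newton_like_step_error:
  fixes H J Ji :: "real^'n^'n"
  assumes "Ji ** J = mat 1"
  shows "norm (x - H *v g - xs) \<le> norm Ji * norm (J *v (x - xs) - g) + norm (H - Ji) * norm g"
proof -
  have "x - H *v g - xs = Ji *v (J *v (x - xs) - g) - (H - Ji) *v g"
    by (simp add: matrix_vector_mul_assoc assms algebra_simps)
  then show ?thesis
    using norm_triangle_ineq4[of "Ji *v (J *v (x - xs) - g)" "(H - Ji) *v g"]
      norm_matrix_vector_mult_le[of Ji] norm_matrix_vector_mult_le[of "H - Ji" g]
    by (smt (verit))
qed

lemma norm_le_of_approx_image:
  fixes J Ji :: "real^'n^'n"
  assumes "Ji ** J = mat 1" and "norm (v - J *v u) \<le> \<eta> * norm u" and "norm Ji * \<eta> \<le> 1/2"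
  shows "norm u \<le> 2 * norm Ji * norm v"
proof -
  have "norm u = norm (Ji *v (J *v u))"
    by (simp add: matrix_vector_mul_assoc assms(1))
  also have "\<dots> \<le> norm Ji * norm (J *v u)"
    by (rule norm_matrix_vector_mult_le)
  also have "\<dots> \<le> norm Ji * (norm v + \<eta> * norm u)"
    using norm_triangle_sub[of "J *v u" v] norm_minus_commute[of v "J *v u"] assms(2)
    by (intro mult_left_mono) simp_all
  also have "\<dots> \<le> norm Ji * norm v + norm u / 2"
    using mult_right_mono[OF assms(3) norm_ge_zero[of u]] by (simp add: algebra_simps)
  finally show ?thesis
    by simp
qed

lemma is_vnormD:
  assumes "is_vnorm nv"
  shows vnorm_eq_0_iff: "nv x = 0 \<longleftrightarrow> x = 0"
    and vnorm_scaleR: "nv (c *\<^sub>R x) = \<bar>c\<bar> * nv x"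
    and vnorm_triangle: "nv (x + y) \<le> nv x + nv y"
  using assms unfolding is_vnorm_def by blast+

lemma vnorm_zero:
  assumes "is_vnorm nv"
  shows "nv 0 = 0"
  using vnorm_eq_0_iff[OF assms] by blast

lemma vnorm_minus_commute:
  assumes "is_vnorm nv"
  shows "nv (x - y) = nv (y - x)"
  using vnorm_scaleR[OF assms, of "-1" "x - y"] by simp

lemma vnorm_nonneg:
  assumes "is_vnorm nv"
  shows "0 \<le> nv x"
  using vnorm_triangle[OF assms, of x "-x"] vnorm_zero[OF assms]
    vnorm_minus_commute[OF assms, of 0 x] by simp

lemma vnorm_sum_le:
  assumes "is_vnorm nv" and "finite A"
  shows "nv (sum f A) \<le> (\<Sum>i\<in>A. nv (f i))"
  using assms(2)
proof (induction A rule: finite_induct)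
  case (insert a A)
  then show ?case
    using vnorm_triangle[OF assms(1), of "f a" "sum f A"] by simp
qed (simp add: vnorm_zero[OF assms(1)])

lemma vnorm_le_norm:
  fixes nv :: "real^'n \<Rightarrow> real"
  assumes "is_vnorm nv"
  obtains c where "0 < c" "\<And>x. nv x \<le> c * norm x"
proof
  let ?c = "(\<Sum>i\<in>UNIV. nv (axis i (1::real) :: real^'n)) + 1"
  show "0 < ?c"
    by (simp add: sum_nonneg add_nonneg_pos vnorm_nonneg[OF assms])
  fix x :: "real^'n"
  have "nv x = nv (\<Sum>i\<in>UNIV. x $ i *\<^sub>R axis i 1)"
    using basis_expansion[of x] by (simp add: scalar_mult_eq_scaleR)
  also have "\<dots> \<le> (\<Sum>i\<in>UNIV. nv (x $ i *\<^sub>R axis i 1))"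
    by (rule vnorm_sum_le[OF assms]) simp
  also have "\<dots> = (\<Sum>i\<in>UNIV. \<bar>x $ i\<bar> * nv (axis i 1))"
    by (simp add: vnorm_scaleR[OF assms])
  also have "\<dots> \<le> (\<Sum>i\<in>UNIV. norm x * nv (axis i 1))"
    by (intro sum_mono mult_right_mono)
      (simp_all add: component_le_norm_cart vnorm_nonneg[OF assms])
  also have "\<dots> \<le> ?c * norm x"
    by (simp add: sum_distrib_left[symmetric] distrib_left mult.commute)
  finally show "nv x \<le> ?c * norm x" .
qed

lemma vnorm_equivalent:
  fixes nv :: "real^'n \<Rightarrow> real"
  assumes nv: "is_vnorm nv"
  obtains c1 c2 where "0 < c1" "0 < c2" "\<And>x. c1 * norm x \<le> nv x \<and> nv x \<le> c2 * norm x"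
proof -
  obtain c2 where c2: "0 < c2" "\<And>x. nv x \<le> c2 * norm x"
    using vnorm_le_norm[OF nv] by blast
  have "\<bar>nv x - nv y\<bar> \<le> c2 * norm (x - y)" for x y
    using vnorm_triangle[OF nv, of y "x - y"] vnorm_triangle[OF nv, of x "y - x"]
      vnorm_minus_commute[OF nv, of x y] c2(2)[of "x - y"] by simp
  then have "continuous_on (sphere 0 1) nv"
    by (intro lipschitz_on_continuous_on[of c2] lipschitz_onI)
      (simp_all add: dist_norm dist_real_def less_imp_le[OF c2(1)])
  moreover have "sphere (0::real^'n) 1 \<noteq> {}"
    using norm_axis_1 by (metis empty_iff mem_sphere_0)
  ultimately obtain z where z: "z \<in> sphere 0 1" "\<And>y. y \<in> sphere 0 1 \<Longrightarrow> nv z \<le> nv y"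
    using continuous_attains_inf[OF compact_sphere] by metis
  have c1: "0 < nv z"
    using z(1) vnorm_eq_0_iff[OF nv, of z] vnorm_nonneg[OF nv, of z] by auto
  have "nv z * norm x \<le> nv x" for x
  proof (cases "x = 0")
    case False
    then have "nv z \<le> nv (inverse (norm x) *\<^sub>R x)"
      by (intro z(2)) simp
    also have "\<dots> = nv x / norm x"
      by (simp add: vnorm_scaleR[OF nv] field_simps)
    finally show ?thesis
      using False by (simp add: field_simps)
  qed (simp add: vnorm_zero[OF nv])
  with c1 c2 that show ?thesis
    by blast
qed

lemma vnorm_matrix_vector_mult_le:
  fixes A :: "real^'n^'n"
  assumes nv: "is_vnorm nv"
  shows "nv (A *v x) \<le> opnorm nv A * nv x"
proof (cases "x = 0")
  case False
  obtain c1 c2 where c: "0 < c1" "0 < c2" and equiv: "\<And>x. c1 * norm x \<le> nv x \<and> nv x \<le> c2 * norm x"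
    using vnorm_equivalent[OF nv] by blast
  have pos: "0 < nv y" if "y \<noteq> 0" for y
    using that vnorm_eq_0_iff[OF nv, of y] vnorm_nonneg[OF nv, of y] by simp
  have "bdd_above {nv (A *v y) / nv y | y. y \<noteq> 0}"
  proof (rule bdd_aboveI, clarify)
    fix y :: "real^'n"
    assume "y \<noteq> 0"
    have "norm y \<le> nv y / c1"
      using equiv[of y] c(1) by (simp add: pos_le_divide_eq mult.commute)
    have "nv (A *v y) \<le> c2 * (norm A * norm y)"
      using equiv[of "A *v y"] norm_matrix_vector_mult_le[of A y] c(2)
      by (meson mult_left_mono less_imp_le order_trans)
    also have "\<dots> \<le> c2 * (norm A * (nv y / c1))"
      using \<open>norm y \<le> nv y / c1\<close> c(2) by (intro mult_left_mono) simp_all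
    also have "\<dots> = c2 * norm A / c1 * nv y"
      by simp
    finally show "nv (A *v y) / nv y \<le> c2 * norm A / c1"
      using pos[OF \<open>y \<noteq> 0\<close>] by (simp add: divide_le_eq)
  qed
  then have "nv (A *v x) / nv x \<le> opnorm nv A"
    unfolding opnorm_def by (rule cSup_upper[rotated]) (use False in blast)
  then show ?thesis
    using pos[OF False] by (simp add: divide_le_eq)
qed (simp add: vnorm_zero[OF nv])

lemma norm_le_of_vnorm_le:
  assumes "0 < c1" "0 \<le> \<tau>" and equiv: "\<And>x. c1 * norm x \<le> nv x \<and> nv x \<le> c2 * norm x"
    and "nv y \<le> \<tau> * nv z"
  shows "norm y \<le> \<tau> * c2 / c1 * norm z"
proof -
  have "c1 * norm y \<le> \<tau> * (c2 * norm z)"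
    using equiv[of y] equiv[of z] assms(2,4) by (smt (verit) mult_left_mono)
  then show ?thesis
    using assms(1) by (simp add: field_simps)
qed

lemma norm_mult_le_of_opnorm_le:
  fixes A :: "real^'n^'n"
  assumes nv: "is_vnorm nv" and c: "0 < c1" "0 < c2"
    and equiv: "\<And>x. c1 * norm x \<le> nv x \<and> nv x \<le> c2 * norm x"
    and "0 \<le> d" and opnorm_le: "opnorm nv A \<le> K * nv y powr d"
  shows "norm (A *v h) \<le> c2 / c1 * max K 0 * c2 powr d * norm y powr d * norm h"
proof -
  let ?\<kappa> = "max K 0 * (c2 powr d * norm y powr d)"
  have "nv y powr d \<le> c2 powr d * norm y powr d"
    using powr_mono2[OF \<open>0 \<le> d\<close> vnorm_nonneg[OF nv] conjunct2[OF equiv[of y]]] c(2)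
    by (simp add: powr_mult)
  then have "K * nv y powr d \<le> ?\<kappa>"
    by (intro mult_mono) simp_all
  then have \<kappa>: "opnorm nv A \<le> ?\<kappa>"
    using opnorm_le by linarith
  have "c1 * norm (A *v h) \<le> nv (A *v h)"
    using equiv by blast
  also have "\<dots> \<le> opnorm nv A * nv h"
    by (rule vnorm_matrix_vector_mult_le[OF nv])
  also have "\<dots> \<le> ?\<kappa> * (c2 * norm h)"
    using \<kappa> equiv[of h] vnorm_nonneg[OF nv, of h] by (intro mult_mono) simp_all
  finally show ?thesis
    using c(1) by (simp add: field_simps)
qed

lemma linearization_error_le:
  fixes f :: "real^'n \<Rightarrow> real^'m" and f' :: "real^'n \<Rightarrow> real^'n^'m"
  assumes deriv: "\<And>z. z \<in> cball a \<rho> \<Longrightarrow> (f has_derivative (\<lambda>h. f' z *v h)) (at z)"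
    and close: "\<And>z h. z \<in> cball a \<rho> \<Longrightarrow> norm ((f' z - f' a) *v h) \<le> \<kappa> * norm h"
    and x: "x \<in> cball a \<rho>" and y: "y \<in> cball a \<rho>"
  shows "norm (f y - f x - f' a *v (y - x)) \<le> \<kappa> * norm (y - x)"
proof -
  have "norm (f y - f x - f' a *v (y - x)) \<le> norm (y - x) * \<kappa>"
  proof (rule differentiable_bound_linearization[where S = "cball a \<rho>" and f' = "\<lambda>z h. f' z *v h"])
    show "x + t *\<^sub>R (y - x) \<in> cball a \<rho>" if "t \<in> {0..1}" for t
      using convexD_alt[OF convex_cball x y, of t] that by (simp add: algebra_simps)
    show "(f has_derivative (\<lambda>h. f' z *v h)) (at z within cball a \<rho>)" if "z \<in> cball a \<rho>" for z
      using deriv[OF that] by (rule has_derivative_at_withinI)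
    show "onorm ((\<lambda>h. f' z *v h) - (\<lambda>h. f' a *v h)) \<le> \<kappa>" if "z \<in> cball a \<rho>" for z
      by (rule onorm_le) (simp add: close[OF that] matrix_vector_mult_diff_rdistrib[symmetric])
    show "a \<in> cball a \<rho>"
      using order_trans[OF zero_le_dist x[unfolded mem_cball]] by simp
  qed
  then show ?thesis
    by (simp add: mult.commute)
qed

lemma iterate_halving_bounded_deterioration:
  fixes T :: "'a \<Rightarrow> 'a" and a b :: "'a \<Rightarrow> real" and \<phi> :: "real \<Rightarrow> real"
  assumes step: "\<And>z. a z \<le> \<epsilon> \<Longrightarrow> b z \<le> e \<Longrightarrow> a (T z) \<le> a z / 2 \<and> b (T z) \<le> b z + \<phi> (a z)"
    and a_nonneg: "\<And>z. 0 \<le> a z" and \<phi>_mono: "\<And>s t. 0 \<le> s \<Longrightarrow> s \<le> t \<Longrightarrow> \<phi> s \<le> \<phi> t"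
    and start: "a init \<le> \<epsilon>" and budget: "\<And>k. b init + (\<Sum>j<k. \<phi> ((1/2)^j * \<epsilon>)) \<le> e"
  shows "a ((T ^^ k) init) \<le> (1/2)^k * a init \<and> b ((T ^^ k) init) \<le> e"
proof -
  have "a ((T ^^ k) init) \<le> (1/2)^k * a init \<and> b ((T ^^ k) init) \<le> b init + (\<Sum>j<k. \<phi> ((1/2)^j * \<epsilon>))"
  proof (induction k)
    case (Suc k)
    let ?z = "(T ^^ k) init"
    have "(1/2::real)^k * a init \<le> (1/2)^k * \<epsilon>"
      using start by (simp add: mult_left_mono)
    then have a_le: "a ?z \<le> (1/2)^k * \<epsilon>"
      using Suc.IH by linarith
    moreover have "(1/2::real)^k * \<epsilon> \<le> \<epsilon>"
      using start a_nonneg[of init] by (simp add: mult_left_le_one_le power_le_one)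
    moreover have "b ?z \<le> e"
      using Suc.IH budget[of k] by linarith
    ultimately have "a (T ?z) \<le> a ?z / 2" "b (T ?z) \<le> b ?z + \<phi> (a ?z)"
      using step[of ?z] by auto
    moreover have "\<phi> (a ?z) \<le> \<phi> ((1/2)^k * \<epsilon>)"
      using \<phi>_mono[OF a_nonneg a_le] .
    ultimately show ?case
      using Suc.IH by simp
  qed simp
  then show ?thesis
    using budget[of k] by linarith
qed

locale quasi_newton_local =
  fixes F :: "real^'n \<Rightarrow> real^'n" and dG :: "real^'n \<Rightarrow> real^'n^'n" and xs :: "real^'n"
    and r0 A K d :: real
  assumes r0_pos: "0 < r0" and A_ge_1: "1 \<le> A" and K_nonneg: "0 \<le> K" and d_pos: "0 < d"
    and F_bound: "\<And>x. x \<in> ball xs r0 \<Longrightarrow> norm (F x - xs) \<le> A * norm (x - xs)"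
    and resid_has_derivative:
      "\<And>x. x \<in> ball xs r0 \<Longrightarrow> (resid F has_derivative (\<lambda>h. dG x *v h)) (at x)"
    and dG_holder:
      "\<And>x h. x \<in> ball xs r0 \<Longrightarrow> norm ((dG x - dG xs) *v h) \<le> K * norm (x - xs) powr d * norm h"
    and resid_root: "resid F xs = 0"
    and invertible_dG: "invertible (dG xs)"
begin

abbreviation J :: "real^'n^'n" where "J \<equiv> dG xs"

abbreviation Ji :: "real^'n^'n" where "Ji \<equiv> matrix_inv J"

lemma Ji_J: "Ji ** J = mat 1"
  using matrix_inv_mult(2)[OF invertible_dG] .

text \<open>The factor A accounts for the secant endpoint F x, which may lie A times farther from xs
  than x.\<close>
definition lin_err :: "real \<Rightarrow> real" where
  "lin_err t = K * (A * t) powr d"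

lemma lin_err_nonneg: "0 \<le> lin_err t"
  by (simp add: lin_err_def K_nonneg)

lemma lin_err_mono: "0 \<le> s \<Longrightarrow> s \<le> t \<Longrightarrow> lin_err s \<le> lin_err t"
  unfolding lin_err_def using A_ge_1 d_pos K_nonneg
  by (intro mult_left_mono powr_mono2) simp_all

lemma lin_err_scale: "0 \<le> c \<Longrightarrow> 0 \<le> t \<Longrightarrow> lin_err (c * t) = c powr d * lin_err t"
  unfolding lin_err_def using A_ge_1 by (simp add: powr_mult mult.left_commute)

lemma lin_err_tendsto_0: "(lin_err \<longlongrightarrow> 0) (at_right 0)"
proof -
  have "((\<lambda>t. A * t) \<longlongrightarrow> 0) (at_right 0)"
    by (intro tendsto_mult_right_zero tendsto_ident_at)
  moreover have "\<forall>\<^sub>F t in at_right 0. 0 \<le> A * t"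
    using eventually_at_right_less[of "0::real"] by (rule eventually_mono) (use A_ge_1 in simp)
  ultimately have "((\<lambda>t. (A * t) powr d) \<longlongrightarrow> 0) (at_right 0)"
    using d_pos by (intro tendsto_zero_powrI) simp_all
  then show ?thesis
    unfolding lin_err_def[abs_def] by (rule tendsto_mult_right_zero)
qed

lemma resid_linearization:
  assumes "\<rho> < r0" "x \<in> cball xs \<rho>" "y \<in> cball xs \<rho>"
  shows "norm (resid F y - resid F x - J *v (y - x)) \<le> K * \<rho> powr d * norm (y - x)"
proof (rule linearization_error_le[OF _ _ assms(2,3)])
  have ball: "z \<in> ball xs r0" if "z \<in> cball xs \<rho>" for z
    using that assms(1) by simp
  show "(resid F has_derivative (\<lambda>h. dG z *v h)) (at z)" if "z \<in> cball xs \<rho>" for z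
    using resid_has_derivative[OF ball[OF that]] .
  show "norm ((dG z - J) *v h) \<le> K * \<rho> powr d * norm h" if "z \<in> cball xs \<rho>" for z h
  proof -
    have "norm (z - xs) powr d \<le> \<rho> powr d"
      using that d_pos by (intro powr_mono2) (simp_all add: dist_norm norm_minus_commute)
    then have "K * norm (z - xs) powr d * norm h \<le> K * \<rho> powr d * norm h"
      using K_nonneg by (intro mult_right_mono mult_left_mono) simp_all
    then show ?thesis
      using dG_holder[OF ball[OF that], of h] by linarith
  qed
qed

lemma mem_cball_A_dist: "x \<in> cball xs (A * norm (x - xs))" "xs \<in> cball xs (A * norm (x - xs))"
  using A_ge_1 mult_right_mono[OF A_ge_1 norm_ge_zero[of "x - xs"]]
  by (simp_all add: dist_norm norm_minus_commute)

lemma resid_near_root: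
  assumes "A * norm (x - xs) < r0"
  shows "norm (resid F x - J *v (x - xs)) \<le> lin_err (norm (x - xs)) * norm (x - xs)"
proof -
  have "norm (resid F x - resid F xs - J *v (x - xs))
      \<le> K * (A * norm (x - xs)) powr d * norm (x - xs)"
    using resid_linearization[OF assms mem_cball_A_dist(2,1)] by simp
  then show ?thesis
    by (simp add: resid_root lin_err_def)
qed

lemma secant_linearization:
  assumes "A * norm (x - xs) < r0"
  shows "norm (qn_v F x - J *v qn_u F x) \<le> lin_err (norm (x - xs)) * norm (qn_u F x)"
proof -
  have "x \<in> ball xs r0"
    using mem_cball_A_dist(1)[of x] assms unfolding mem_cball mem_ball by linarith
  then have "F x \<in> cball xs (A * norm (x - xs))"
    using F_bound by (simp add: dist_norm norm_minus_commute)
  then have "norm (resid F (F x) - resid F x - J *v (F x - x))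
      \<le> K * (A * norm (x - xs)) powr d * norm (F x - x)"
    using resid_linearization[OF assms mem_cball_A_dist(1)] by simp
  then show ?thesis
    by (simp add: qn_v_def qn_u_def lin_err_def)
qed

lemma sum_lin_err_halving_le:
  assumes "0 \<le> \<epsilon>"
  shows "(\<Sum>j<k. lin_err ((1/2)^j * \<epsilon>)) \<le> lin_err \<epsilon> / (1 - (1/2) powr d)"
proof -
  let ?r = "(1/2::real) powr d"
  have r: "0 < ?r" "?r < 1"
    using d_pos by (simp_all add: powr01_less_one)
  have "((1/2::real)^j) powr d = ?r^j" for j
    by (simp add: powr_power[symmetric] powr_realpow[symmetric] powr_powr mult.commute)
  then have "(\<Sum>j<k. lin_err ((1/2)^j * \<epsilon>)) = (\<Sum>j<k. ?r^j) * lin_err \<epsilon>"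
    using assms by (simp add: lin_err_scale sum_distrib_right)
  also have "\<dots> = (1 - ?r^k) * lin_err \<epsilon> / (1 - ?r)"
    using d_pos by (simp add: sum_gp_strict)
  also have "\<dots> \<le> lin_err \<epsilon> / (1 - ?r)"
    using r lin_err_nonneg[of \<epsilon>]
    by (intro divide_right_mono mult_left_le_one_le) (simp_all add: power_le_one)
  finally show ?thesis .
qed

lemma small_radius_exists:
  assumes "0 < c"
  obtains \<epsilon> where "0 < \<epsilon>" "A * \<epsilon> < r0" "(4 * norm Ji + 1) * lin_err \<epsilon> \<le> 1"
    "2 * (norm Ji)^2 * lin_err \<epsilon> / (1 - (1/2) powr d) \<le> c"
proof -
  have lim: "((\<lambda>\<epsilon>. b * lin_err \<epsilon>) \<longlongrightarrow> 0) (at_right 0)" for b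
    by (rule tendsto_mult_right_zero[OF lin_err_tendsto_0])
  have "((\<lambda>\<epsilon>. A * \<epsilon>) \<longlongrightarrow> 0) (at_right 0)"
    by (intro tendsto_mult_right_zero tendsto_ident_at)
  then have "\<forall>\<^sub>F \<epsilon> in at_right 0. 0 < \<epsilon> \<and> A * \<epsilon> < r0 \<and> (4 * norm Ji + 1) * lin_err \<epsilon> < 1 \<and>
      2 * (norm Ji)^2 / (1 - (1/2) powr d) * lin_err \<epsilon> < c"
    using r0_pos assms
    by (intro eventually_conj eventually_at_right_less order_tendstoD(2)[OF lim])
      (auto dest: order_tendstoD(2))
  then obtain \<epsilon> where "0 < \<epsilon> \<and> A * \<epsilon> < r0 \<and> (4 * norm Ji + 1) * lin_err \<epsilon> < 1 \<and>
      2 * (norm Ji)^2 / (1 - (1/2) powr d) * lin_err \<epsilon> < c"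
    using eventually_happens'[OF trivial_limit_at_right_real] by blast
  then show ?thesis
    by (intro that) auto
qed

definition inv_tol :: real where
  "inv_tol = 1 / (4 * (norm J + 1))"

lemma inv_tol_pos: "0 < inv_tol"
  using norm_ge_zero[of J] unfolding inv_tol_def by (intro divide_pos_pos mult_pos_pos) linarith+

context
  fixes x :: "real^'n"
  assumes near: "A * norm (x - xs) < r0"
    and err_small: "(4 * norm Ji + 1) * lin_err (norm (x - xs)) \<le> 1"
begin

lemma norm_Ji_lin_err_le: "norm Ji * lin_err (norm (x - xs)) \<le> 1/4"
  using err_small lin_err_nonneg[of "norm (x - xs)"] by (simp add: algebra_simps)

lemma lin_err_le_1: "lin_err (norm (x - xs)) \<le> 1"
  using err_small mult_nonneg_nonneg[OF norm_ge_zero[of Ji] lin_err_nonneg[of "norm (x - xs)"]]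
  by (simp add: algebra_simps)

lemma qn_step_fst_halves:
  assumes "norm (H - Ji) \<le> inv_tol"
  shows "norm (fst (qn_step F (x, H)) - xs) \<le> norm (x - xs) / 2"
proof -
  have H: "(norm J + 1) * norm (H - Ji) \<le> 1/4"
    using assms norm_ge_zero[of J] by (simp add: inv_tol_def field_simps)
  let ?t = "norm (x - xs)" and ?g = "resid F x" and ?\<eta> = "lin_err (norm (x - xs))"
  have lin: "norm (J *v (x - xs) - ?g) \<le> ?\<eta> * ?t"
    using resid_near_root[OF near] by (simp add: norm_minus_commute)
  have "norm ?g \<le> norm (J *v (x - xs)) + norm (J *v (x - xs) - ?g)"
    using norm_triangle_sub[of ?g "J *v (x - xs)"] by (simp add: norm_minus_commute)
  also have "\<dots> \<le> norm J * ?t + ?t"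
    using norm_matrix_vector_mult_le[of J "x - xs"] lin
      mult_right_mono[OF lin_err_le_1 norm_ge_zero[of "x - xs"]] by linarith
  finally have g: "norm ?g \<le> (norm J + 1) * ?t"
    by (simp add: algebra_simps)
  have "fst (qn_step F (x, H)) = x - H *v ?g"
    by (simp add: qn_step_def Let_def)
  then have "norm (fst (qn_step F (x, H)) - xs)
      \<le> norm Ji * norm (J *v (x - xs) - ?g) + norm (H - Ji) * norm ?g"
    using newton_like_step_error[OF Ji_J] by simp
  also have "\<dots> \<le> norm Ji * (?\<eta> * ?t) + norm (H - Ji) * ((norm J + 1) * ?t)"
    using lin g by (intro add_mono mult_left_mono) simp_all
  also have "\<dots> = (norm Ji * ?\<eta>) * ?t + ((norm J + 1) * norm (H - Ji)) * ?t"
    by (simp add: algebra_simps)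
  also have "\<dots> \<le> 1/4 * ?t + 1/4 * ?t"
    using norm_Ji_lin_err_le H by (intro add_mono mult_right_mono) simp_all
  finally show ?thesis
    by simp
qed

lemma norm_qn_u_le: "norm (qn_u F x) \<le> 2 * norm Ji * norm (qn_v F x)"
  using norm_le_of_approx_image[OF Ji_J secant_linearization[OF near]] norm_Ji_lin_err_le by simp

lemma qn_v_nonzero:
  assumes "x \<noteq> xs"
  shows "qn_v F x \<noteq> 0"
proof -
  have "norm (x - xs) \<le> 2 * norm Ji * norm (resid F x)"
    using norm_le_of_approx_image[OF Ji_J resid_near_root[OF near]] norm_Ji_lin_err_le by simp
  then have "qn_u F x \<noteq> 0"
    using assms by (auto simp: qn_u_def resid_def)
  then show ?thesis
    using norm_qn_u_le by auto
qed

lemma qn_step_snd_deviation: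
  "norm (snd (qn_step F (x, H)) - Ji) \<le> norm (H - Ji) + 2 * (norm Ji)^2 * lin_err (norm (x - xs))"
proof -
  let ?u = "qn_u F x" and ?v = "qn_v F x" and ?\<eta> = "lin_err (norm (x - xs))"
  have "norm (?u - Ji *v ?v) = norm (Ji *v (J *v ?u - ?v))"
    by (simp add: matrix_vector_mul_assoc Ji_J algebra_simps)
  also have "\<dots> \<le> norm Ji * (?\<eta> * norm ?u)"
    using norm_matrix_vector_mult_le[of Ji "J *v ?u - ?v"] secant_linearization[OF near]
    by (simp add: norm_minus_commute order_trans mult_left_mono)
  also have "\<dots> \<le> norm Ji * (?\<eta> * (2 * norm Ji * norm ?v))"
    using norm_qn_u_le lin_err_nonneg by (intro mult_left_mono) simp_all
  also have "\<dots> = 2 * (norm Ji)^2 * ?\<eta> * norm ?v"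
    by (simp add: power2_eq_square algebra_simps)
  finally have "norm (?u - Ji *v ?v) / norm ?v \<le> 2 * (norm Ji)^2 * ?\<eta>"
    by (cases "?v = 0") (simp_all add: divide_le_eq lin_err_nonneg)
  moreover have "norm (snd (qn_step F (x, H)) - Ji)
      \<le> norm (H - Ji) + norm (?u - Ji *v ?v) / norm ?v"
    using broyden_update_deviation[of H ?v ?u Ji] by (simp add: qn_step_def Let_def)
  ultimately show ?thesis
    by linarith
qed

end

context
  fixes \<epsilon> :: real
  assumes radius_pos: "0 < \<epsilon>" and radius_near: "A * \<epsilon> < r0"
    and radius_err: "(4 * norm Ji + 1) * lin_err \<epsilon> \<le> 1"
    and radius_budget: "2 * (norm Ji)^2 * lin_err \<epsilon> / (1 - (1/2) powr d) \<le> inv_tol / 2"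
begin

lemma near_of_le_radius:
  assumes "norm (x - xs) \<le> \<epsilon>"
  shows "A * norm (x - xs) < r0" and "(4 * norm Ji + 1) * lin_err (norm (x - xs)) \<le> 1"
proof -
  show "A * norm (x - xs) < r0"
    using mult_left_mono[OF assms, of A] A_ge_1 radius_near by linarith
  have "lin_err (norm (x - xs)) \<le> lin_err \<epsilon>"
    using lin_err_mono assms by simp
  then show "(4 * norm Ji + 1) * lin_err (norm (x - xs)) \<le> 1"
    using mult_left_mono[of _ _ "4 * norm Ji + 1"] radius_err by (smt (verit) norm_ge_zero)
qed

lemma qn_iterates_halve:
  assumes x0: "norm (x0 - xs) \<le> \<epsilon>" and H0: "norm (H0 - Ji) \<le> inv_tol / 2"
  shows "norm (fst ((qn_step F ^^ k) (x0, H0)) - xs) \<le> (1/2)^k * norm (x0 - xs)"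
proof -
  define \<phi> where "\<phi> s = 2 * (norm Ji)^2 * lin_err s" for s
  have step: "norm (fst (qn_step F z) - xs) \<le> norm (fst z - xs) / 2 \<and>
      norm (snd (qn_step F z) - Ji) \<le> norm (snd z - Ji) + \<phi> (norm (fst z - xs))"
    if "norm (fst z - xs) \<le> \<epsilon>" "norm (snd z - Ji) \<le> inv_tol" for z
    using qn_step_fst_halves[OF near_of_le_radius[OF that(1)] that(2)]
      qn_step_snd_deviation[OF near_of_le_radius[OF that(1)], of "snd z"]
    by (simp add: \<phi>_def)
  have \<phi>_mono: "\<phi> s \<le> \<phi> t" if "0 \<le> s" "s \<le> t" for s t
    unfolding \<phi>_def using lin_err_mono[OF that] by (intro mult_left_mono) simp_all
  have budget: "norm (snd (x0, H0) - Ji) + (\<Sum>j<k. \<phi> ((1/2)^j * \<epsilon>)) \<le> inv_tol" for k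
  proof -
    have "(\<Sum>j<k. \<phi> ((1/2)^j * \<epsilon>)) = 2 * (norm Ji)^2 * (\<Sum>j<k. lin_err ((1/2)^j * \<epsilon>))"
      by (simp add: \<phi>_def sum_distrib_left)
    also have "\<dots> \<le> 2 * (norm Ji)^2 * (lin_err \<epsilon> / (1 - (1/2) powr d))"
      using radius_pos by (intro mult_left_mono sum_lin_err_halving_le) simp_all
    also have "\<dots> = 2 * (norm Ji)^2 * lin_err \<epsilon> / (1 - (1/2) powr d)"
      by simp
    finally show ?thesis
      using radius_budget H0 by simp
  qed
  have start: "norm (fst (x0, H0) - xs) \<le> \<epsilon>"
    using x0 by simp
  show ?thesis
    using iterate_halving_bounded_deterioration[where a = "\<lambda>z. norm (fst z - xs)"
        and b = "\<lambda>z. norm (snd z - Ji)", OF step norm_ge_zero \<phi>_mono start budget]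
    by simp
qed

end

lemma qn_local_convergence:
  obtains \<epsilon> e where "0 < \<epsilon>" "0 < e"
    and "\<And>x. norm (x - xs) < \<epsilon> \<Longrightarrow> x \<noteq> xs \<Longrightarrow> qn_v F x \<noteq> 0"
    and "\<And>x0 H0 k. norm (x0 - xs) < \<epsilon> \<Longrightarrow> norm (H0 - Ji) \<le> e \<Longrightarrow>
           norm (fst ((qn_step F ^^ k) (x0, H0)) - xs) < \<epsilon>"
    and "\<And>x0 H0. norm (x0 - xs) < \<epsilon> \<Longrightarrow> norm (H0 - Ji) \<le> e \<Longrightarrow>
           (\<lambda>k. fst ((qn_step F ^^ k) (x0, H0))) \<longlonglongrightarrow> xs"
proof -
  obtain \<epsilon> where radius: "0 < \<epsilon>" "A * \<epsilon> < r0" "(4 * norm Ji + 1) * lin_err \<epsilon> \<le> 1"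
    "2 * (norm Ji)^2 * lin_err \<epsilon> / (1 - (1/2) powr d) \<le> inv_tol / 2"
    using small_radius_exists[of "inv_tol / 2"] inv_tol_pos by auto
  show ?thesis
  proof (rule that[OF radius(1), of "inv_tol / 2"])
    show "0 < inv_tol / 2"
      using inv_tol_pos by simp
    show "qn_v F x \<noteq> 0" if "norm (x - xs) < \<epsilon>" "x \<noteq> xs" for x
      using qn_v_nonzero[OF near_of_le_radius[OF radius]] that by simp
    fix x0 H0
    assume x0: "norm (x0 - xs) < \<epsilon>" and H0: "norm (H0 - Ji) \<le> inv_tol / 2"
    note halving = qn_iterates_halve[OF radius less_imp_le[OF x0] H0]
    show "norm (fst ((qn_step F ^^ k) (x0, H0)) - xs) < \<epsilon>" for k
      using halving[of k] x0 mult_left_le_one_le[OF norm_ge_zero[of "x0 - xs"], of "(1/2)^k"]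
      by (simp add: power_le_one)
    have "(\<lambda>k. (1/2::real)^k * norm (x0 - xs)) \<longlonglongrightarrow> 0"
      by (intro tendsto_mult_left_zero LIMSEQ_power_zero) simp
    then have "(\<lambda>k. fst ((qn_step F ^^ k) (x0, H0)) - xs) \<longlonglongrightarrow> 0"
      by (rule Lim_null_comparison[rotated]) (use halving in simp)
    then show "(\<lambda>k. fst ((qn_step F ^^ k) (x0, H0))) \<longlonglongrightarrow> xs"
      by (rule LIM_zero_cancel)
  qed
qed

lemma qn_local_convergence_weighted:
  fixes nv :: "real^'n \<Rightarrow> real" and M :: "real^'n^'n"
  assumes c1: "0 < c1" and lower: "\<And>x. c1 * norm x \<le> nv x" and M: "invertible M"
  shows "(\<exists>N. open N \<and> (xs, Ji) \<in> N \<and> (\<forall>x H. (x, H) \<in> N \<longrightarrow> x \<noteq> xs \<longrightarrow> qn_v F x \<noteq> 0)) \<and>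
    (\<exists>\<epsilon>>0. \<exists>\<delta>>0. \<forall>x0 H0. nv (x0 - xs) < \<epsilon> \<longrightarrow> frob_norm (M ** (H0 - Ji) ** M) < \<delta> \<longrightarrow>
      (\<forall>k. fst ((qn_step F ^^ k) (x0, H0)) \<noteq> xs \<longrightarrow> qn_v F (fst ((qn_step F ^^ k) (x0, H0))) \<noteq> 0) \<and>
      (\<lambda>k. fst ((qn_step F ^^ k) (x0, H0))) \<longlonglongrightarrow> xs)"
proof -
  obtain \<epsilon> e where \<epsilon>: "0 < \<epsilon>" "0 < e"
    and nonzero: "\<And>x. norm (x - xs) < \<epsilon> \<Longrightarrow> x \<noteq> xs \<Longrightarrow> qn_v F x \<noteq> 0"
    and stays: "\<And>x0 H0 k. norm (x0 - xs) < \<epsilon> \<Longrightarrow> norm (H0 - Ji) \<le> e \<Longrightarrow>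
      norm (fst ((qn_step F ^^ k) (x0, H0)) - xs) < \<epsilon>"
    and converges: "\<And>x0 H0. norm (x0 - xs) < \<epsilon> \<Longrightarrow> norm (H0 - Ji) \<le> e \<Longrightarrow>
      (\<lambda>k. fst ((qn_step F ^^ k) (x0, H0))) \<longlonglongrightarrow> xs"
    using qn_local_convergence by blast
  obtain C where C: "0 < C" "\<And>E. norm E \<le> C * norm (M ** E ** M)"
    using norm_le_sandwich[OF M] by blast
  have x0: "norm (x0 - xs) < \<epsilon>" if "nv (x0 - xs) < c1 * \<epsilon>" for x0
    using lower[of "x0 - xs"] that c1 by (meson mult_less_cancel_left_pos order_le_less_trans)
  have H0: "norm (H0 - Ji) \<le> e" if "frob_norm (M ** (H0 - Ji) ** M) < e / C" for H0
    using C(2)[of "H0 - Ji"] that C(1)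
    by (simp add: frob_norm_eq_norm pos_less_divide_eq mult.commute)
  show ?thesis
    apply (intro conjI)
    subgoal
      using nonzero \<epsilon>(1)
      by (intro exI[of _ "ball xs \<epsilon> \<times> UNIV"]) (auto simp: open_Times dist_norm norm_minus_commute)
    subgoal
      using \<epsilon> c1 C(1) nonzero[OF stays[OF x0 H0]] converges[OF x0 H0]
      by (intro exI[of _ "c1 * \<epsilon>"] exI[of _ "e / C"] conjI) auto
    done
qed

end

lemma quasi_newton_local_of_vnorm:
  fixes F :: "real^'n \<Rightarrow> real^'n" and dG :: "real^'n \<Rightarrow> real^'n^'n"
  assumes nv: "is_vnorm nv" and c: "0 < c1" "0 < c2"
    and equiv: "\<And>x. c1 * norm x \<le> nv x \<and> nv x \<le> c2 * norm x"
    and r0: "0 < r0" "ball xs r0 \<subseteq> D"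
    and contr: "0 \<le> \<tau>" "\<And>x. x \<in> ball xs r0 \<Longrightarrow> nv (F x - xs) \<le> \<tau> * nv (x - xs)"
    and deriv: "\<forall>x\<in>D. (resid F has_derivative (\<lambda>h. dG x *v h)) (at x)"
    and root: "resid F xs = 0" and nonsing: "invertible (dG xs)" and d: "0 < d"
    and hold: "\<forall>x\<in>D. opnorm nv (dG x - dG xs) \<le> K * nv (x - xs) powr d"
  shows "quasi_newton_local F dG xs r0 (max 1 (\<tau> * c2 / c1)) (c2 / c1 * max K 0 * c2 powr d) d"
proof
  fix x
  assume x: "x \<in> ball xs r0"
  then have "x \<in> D"
    using r0(2) by blast
  have "norm (F x - xs) \<le> \<tau> * c2 / c1 * norm (x - xs)"
    using norm_le_of_vnorm_le[OF c(1) contr(1) equiv contr(2)[OF x]] .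
  then show "norm (F x - xs) \<le> max 1 (\<tau> * c2 / c1) * norm (x - xs)"
    by (smt (verit) max.cobounded2 mult_right_mono norm_ge_zero)
  show "(resid F has_derivative (\<lambda>h. dG x *v h)) (at x)"
    using deriv \<open>x \<in> D\<close> by blast
  show "norm ((dG x - dG xs) *v h)
      \<le> c2 / c1 * max K 0 * c2 powr d * norm (x - xs) powr d * norm h" for h
    using norm_mult_le_of_opnorm_le[OF nv c equiv] d hold \<open>x \<in> D\<close> by simp
qed (use r0 c d root nonsing in simp_all)

theorem theorem2:
  fixes F :: "real^'n \<Rightarrow> real^'n"
    and dG :: "real^'n \<Rightarrow> real^'n^'n"
    and xs :: "real^'n"
    and nv :: "real^'n \<Rightarrow> real"
    and D :: "(real^'n) set"
    and d K mu2 :: real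
    and M :: "real^'n^'n"
  assumes nv: "is_vnorm nv"
    and MM: "\<exists>S \<tau>. open S \<and> xs \<in> S \<and> 0 < \<tau> \<and> \<tau> < 1 \<and>
                 (\<forall>x\<in>S. nv (F x - xs) \<le> \<tau> * nv (x - xs))"
    and D: "open D" "convex D" "xs \<in> D"
    and deriv: "\<forall>x\<in>D. (resid F has_derivative (\<lambda>h. dG x *v h)) (at x)"
    and root: "resid F xs = 0"
    and nonsing: "invertible (dG xs)"
    and d: "d > 0"
    and hold: "\<forall>x\<in>D. opnorm nv (dG x - dG xs) \<le> K * nv (x - xs) powr d"
    and mu2: "mu2 \<ge> 0"
    and Msym: "transpose M = M"
    and Minv: "invertible M"
    and N': "\<exists>N'. open N' \<and> (xs, matrix_inv (dG xs)) \<in> N' \<and>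
              (\<forall>x H. (x, H) \<in> N' \<longrightarrow> qn_v F x \<noteq> 0 \<longrightarrow>
                 nv (M *v qn_v F x - matrix_inv M *v qn_v F x) / nv (matrix_inv M *v qn_v F x)
                   \<le> mu2 * nv (qn_v F x) powr d)"
  shows "(\<exists>N. open N \<and> (xs, matrix_inv (dG xs)) \<in> N \<and>
            (\<forall>x H. (x, H) \<in> N \<longrightarrow> x \<noteq> xs \<longrightarrow> qn_v F x \<noteq> 0)) \<and>
         (\<exists>\<epsilon>>0. \<exists>\<delta>>0. \<forall>x0 H0.
            nv (x0 - xs) < \<epsilon> \<longrightarrow>
            frob_norm (M ** (H0 - matrix_inv (dG xs)) ** M) < \<delta> \<longrightarrow>
            (\<forall>k. fst ((qn_step F ^^ k) (x0, H0)) \<noteq> xs \<longrightarrow>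
                   qn_v F (fst ((qn_step F ^^ k) (x0, H0))) \<noteq> 0) \<and>
            (\<lambda>k. fst ((qn_step F ^^ k) (x0, H0))) \<longlonglongrightarrow> xs)"
proof -
  obtain c1 c2 where c: "0 < c1" "0 < c2" and equiv: "\<And>x. c1 * norm x \<le> nv x \<and> nv x \<le> c2 * norm x"
    using vnorm_equivalent[OF nv] by blast
  obtain S \<tau> where S: "open S" "xs \<in> S" "0 < \<tau>"
    and contr: "\<And>x. x \<in> S \<Longrightarrow> nv (F x - xs) \<le> \<tau> * nv (x - xs)"
    using MM by blast
  obtain r0 where r0: "0 < r0" "ball xs r0 \<subseteq> S \<inter> D"
    using open_contains_ball_eq[OF open_Int[OF S(1) D(1)]] S(2) D(3) by blast
  then have "ball xs r0 \<subseteq> D" "\<And>x. x \<in> ball xs r0 \<Longrightarrow> nv (F x - xs) \<le> \<tau> * nv (x - xs)"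
    using contr by auto
  from quasi_newton_local_of_vnorm[OF nv c equiv r0(1) this(1) less_imp_le[OF S(3)] this(2)
      deriv root nonsing d hold]
  interpret quasi_newton_local F dG xs r0 "max 1 (\<tau> * c2 / c1)" "c2 / c1 * max K 0 * c2 powr d" d .
  show ?thesis
    using qn_local_convergence_weighted[OF c(1) _ Minv] equiv by blast
qed

end
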